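(* Define, for $n'\in\mathbb{N}_+$ and $n\in\{0,\dots,n'\}$, $\gamma_{n,n'}=\sum_{j=0}^{n}\binom{n'}{j}{\rm e}_{n'-j}$. Then the collection $(\gamma_{n,n'})_{n'\in\mathbb{N}_+,n\in\{0,\dots,n'\}}$ belongs to $\Gamma$ (i.e. satisfies the bound condition).
   Context: $\sigma(x)=\max(0,x)$; $\mathrm{RL}(n,n')$ ($n,n'\in\mathbb{N}_+$) is the set of maps $h:\mathbb{R}^n\to\mathbb{R}^{n'}$, $h(x)_i=\sigma(\langle x,w_i\rangle+b_i)$ for some $W\in\mathbb{R}^{n'\times n}$ with rows $w_i$, $b\in\mathbb{R}^{n'}$; convention: $\mathrm{RL}(0,n')$ are constant maps $\{0\}\to\mathbb{R}^{n'}$ with $\mathcal{H}_{n'}(\mathcal{S}_h)={\rm e}_0$. $S_h(x)_i=1$ iff $\langle x,w_i\rangle+b_i>0$ else $0$; $\mathcal{S}_h=\{S_h(x):x\in\mathbb{R}^n\}$; $|s|=\sum_is_i$. $V$: sequences $(v_j)_{j\in\mathbb{N}}$ of nonnegative integers with finite sum; ${\rm e}_i$ has $({\rm e}_i)_j=\delta_{ij}$; $v\preceq w$ iff $\sum_{j\ge J}v_j\le\sum_{j\ge J}w_j$ for all $J\in\mathbb{N}$; for finite families, $\max_i(v^{(i)})_J=\max_i\sum_{j\ge J}v^{(i)}_j-\max_i\sum_{j\ge J+1}v^{(i)}_j$. $\mathcal{H}_{n'}(\mathcal{S})=(|\{s\in\mathcal{S}:|s|=j\}|)_j$. $\Gamma$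 (bound condition): families $(\gamma_{n,n'})_{n'\in\mathbb{N}_+,n\in\{0,\dots,n'\}}$ in $V$ with (i) $\max\{\mathcal{H}_{n'}(\mathcal{S}_h):h\in\mathrm{RL}(n,n')\}\preceq\gamma_{n,n'}$ for all $n'\in\mathbb{N}_+$, $n\in\{0,\dots,n'\}$, and (ii) $n\le\tilde n\le n'\Rightarrow\gamma_{n,n'}\preceq\gamma_{\tilde n,n'}$. *)

theory Defs
  imports Complex_Main
begin

definition relu :: "real \<Rightarrow> real" where
  "relu t = max 0 t"

text \<open>Vectors in R^n are represented as functions nat => real, only coordinates k < n matter.
 A ReLU layer h in RL(n,n') is given by weights W (row i = w_i, W i k for i < n', k < n)
 and biases b (b i for i < n').\<close>
definition RL_layer :: "nat \<Rightarrow> nat \<Rightarrow> (nat \<Rightarrow> nat \<Rightarrow> real) \<Rightarrow> (nat \<Rightarrow> real)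
    \<Rightarrow> (nat \<Rightarrow> real) \<Rightarrow> (nat \<Rightarrow> real)" where
  "RL_layer n n' W b x = (\<lambda>i. if i < n' then relu ((\<Sum>k<n. x k * W i k) + b i) else 0)"

text \<open>Activation pattern S_h(x) in {0,1}^{n'} (as nat => nat, zero at indices >= n').\<close>
definition act_pattern :: "nat \<Rightarrow> nat \<Rightarrow> (nat \<Rightarrow> nat \<Rightarrow> real) \<Rightarrow> (nat \<Rightarrow> real)
    \<Rightarrow> (nat \<Rightarrow> real) \<Rightarrow> (nat \<Rightarrow> nat)" where
  "act_pattern n n' W b x = (\<lambda>i. if i < n' \<and> (\<Sum>k<n. x k * W i k) + b i > 0 then 1 else 0)"

definition patterns :: "nat \<Rightarrow> nat \<Rightarrow> (nat \<Rightarrow> nat \<Rightarrow> real) \<Rightarrow> (nat \<Rightarrow> real)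
    \<Rightarrow> (nat \<Rightarrow> nat) set" where
  "patterns n n' W b = {act_pattern n n' W b x | x. \<forall>k\<ge>n. x k = 0}"

definition pat_size :: "nat \<Rightarrow> (nat \<Rightarrow> nat) \<Rightarrow> nat" where
  "pat_size n' s = (\<Sum>i<n'. s i)"

definition hist :: "nat \<Rightarrow> (nat \<Rightarrow> nat) set \<Rightarrow> (nat \<Rightarrow> nat)" where
  "hist n' S = (\<lambda>j. card {s \<in> S. pat_size n' s = j})"

text \<open>The space V: nonnegative integer sequences with finite sum (= finite support).\<close>
definition inV :: "(nat \<Rightarrow> nat) \<Rightarrow> bool" where
  "inV v \<longleftrightarrow> finite {j. v j \<noteq> 0}"

definition unitv :: "nat \<Rightarrow> (nat \<Rightarrow> nat)" ("\<ee>") where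
  "unitv i = (\<lambda>j. if j = i then 1 else 0)"

definition tail :: "(nat \<Rightarrow> nat) \<Rightarrow> nat \<Rightarrow> nat" where
  "tail v J = (\<Sum>j \<in> {j. J \<le> j \<and> v j \<noteq> 0}. v j)"

definition vle :: "(nat \<Rightarrow> nat) \<Rightarrow> (nat \<Rightarrow> nat) \<Rightarrow> bool" (infix "\<preceq>\<^sub>V" 50) where
  "v \<preceq>\<^sub>V w \<longleftrightarrow> (\<forall>J. tail v J \<le> tail w J)"

text \<open>Maximum of a finite (nonempty) family of elements of V.\<close>
definition vmax :: "(nat \<Rightarrow> nat) set \<Rightarrow> (nat \<Rightarrow> nat)" where
  "vmax A = (\<lambda>J. Max ((\<lambda>v. tail v J) ` A) - Max ((\<lambda>v. tail v (Suc J)) ` A))"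

definition hist_family :: "nat \<Rightarrow> nat \<Rightarrow> (nat \<Rightarrow> nat) set" where
  "hist_family n n' = (if n = 0 then {\<ee> 0}
     else {hist n' (patterns n n' W b) | W b. True})"

definition bound_condition :: "(nat \<Rightarrow> nat \<Rightarrow> (nat \<Rightarrow> nat)) \<Rightarrow> bool" where
  "bound_condition g \<longleftrightarrow>
     (\<forall>n' n. 1 \<le> n' \<and> n \<le> n' \<longrightarrow> inV (g n n')) \<and>
     (\<forall>n' n. 1 \<le> n' \<and> n \<le> n' \<longrightarrow> vmax (hist_family n n') \<preceq>\<^sub>V g n n') \<and>
     (\<forall>n' n m. 1 \<le> n' \<and> n \<le> m \<and> m \<le> n' \<longrightarrow> g n n' \<preceq>\<^sub>V g m n')"

definition gamma_bin :: "nat \<Rightarrow> nat \<Rightarrow> (nat \<Rightarrow> nat)" where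
  "gamma_bin n n' = (\<lambda>k. \<Sum>j\<le>n. (n' choose j) * \<ee> (n' - j) k)"

end

theory Submission
  imports Defs
begin

text \<open>Both sides of the bound are compared through their tail sums. At \<open>J \<le> n'\<close> the tail sum of
  \<open>hist n' (patterns n n' W b)\<close> counts the activation patterns with at most \<open>n' - J\<close> inactive
  neurons, while that of \<open>gamma_bin n n'\<close> is \<open>\<Sum>i\<le>min n (n' - J). n' choose i\<close>. The latter
  bounds the former by the deletion--restriction argument for hyperplane arrangements: for \<open>m\<close> neurons on a \<open>d\<close>-dimensional
  input space, at most \<open>\<Sum>i\<le>min d k. m choose i\<close> patterns have at most \<open>k\<close> inactive neurons.
  Forgetting the last neuron identifies exactly the pairs of patterns that differ only in it;
  such a pattern is realised on both sides of that neuron's hyperplane, hence on the hyperplane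
  itself, which carries an arrangement of the remaining neurons in dimension \<open>d - 1\<close> with at
  most \<open>k - 1\<close> inactive ones. Pascal's rule closes the induction on \<open>m\<close>. Finally, the tail sums of
  \<open>vmax\<close> of a finite family are the maxima of the members' tail sums, so \<open>vmax\<close> is dominated
  as soon as every member is.\<close>

subsection \<open>Tail sums\<close>

lemma inV_iff_vanishes_beyond: "inV v \<longleftrightarrow> (\<exists>N. \<forall>j>N. v j = 0)"
proof
  assume "inV v"
  then obtain N where "\<forall>j\<in>{j. v j \<noteq> 0}. j \<le> N"
    unfolding inV_def finite_nat_set_iff_bounded_le by blast
  then have "\<forall>j>N. v j = 0" by (meson leD mem_Collect_eq)
  then show "\<exists>N. \<forall>j>N. v j = 0" ..
next
  assume "\<exists>N. \<forall>j>N. v j = 0"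
  then obtain N where N: "\<forall>j>N. v j = 0" ..
  have "{j. v j \<noteq> 0} \<subseteq> {..N}"
  proof
    fix j assume "j \<in> {j. v j \<noteq> 0}"
    then show "j \<in> {..N}" using N by (rule_tac ccontr) auto
  qed
  then show "inV v" unfolding inV_def by (rule finite_subset) simp
qed

lemma tail_vanishes_beyond:
  assumes "\<forall>j>N. v j = 0" "N < J"
  shows "tail v J = 0"
proof -
  have "{j. J \<le> j \<and> v j \<noteq> 0} = {}" using assms by fastforce
  then show ?thesis unfolding tail_def by simp
qed

lemma tail_Suc:
  assumes "inV v"
  shows "tail v J = v J + tail v (Suc J)"
proof -
  have fin: "finite {j. Suc J \<le> j \<and> v j \<noteq> 0}"
    using assms unfolding inV_def by (rule finite_subset[rotated]) auto
  show ?thesis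
  proof (cases "v J = 0")
    case True
    then have "{j. J \<le> j \<and> v j \<noteq> 0} = {j. Suc J \<le> j \<and> v j \<noteq> 0}"
      by (auto simp: Suc_le_eq order.order_iff_strict)
    then show ?thesis unfolding tail_def using True by simp
  next
    case False
    then have "{j. J \<le> j \<and> v j \<noteq> 0} = insert J {j. Suc J \<le> j \<and> v j \<noteq> 0}"
      by (auto simp: Suc_le_eq order.order_iff_strict)
    then show ?thesis unfolding tail_def using fin by simp
  qed
qed

lemma tail_eqI:
  assumes vanish: "\<forall>j>N. f j = 0" and recurrence: "\<forall>j. f j = v j + f (Suc j)"
  shows "tail v = f"
proof
  fix J
  have v_vanish: "\<forall>j>N. v j = 0" using vanish recurrence by (metis add_eq_0_iff_both_eq_0)
  then have "inV v" using inV_iff_vanishes_beyond by blast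
  show "tail v J = f J"
  proof (cases "N < J")
    case True
    then show ?thesis using tail_vanishes_beyond[OF v_vanish] vanish by simp
  next
    case False
    then have "J \<le> Suc N" by simp
    then show ?thesis
    proof (induction rule: inc_induct)
      case base
      show ?case using tail_vanishes_beyond[OF v_vanish] vanish by simp
    next
      case (step j)
      then show ?case using tail_Suc[OF \<open>inV v\<close>, of j] recurrence[rule_format, of j] by linarith
    qed
  qed
qed

lemma vmax_vle:
  assumes "finite A" "A \<noteq> {}" "\<forall>v\<in>A. inV v" "\<forall>v\<in>A. v \<preceq>\<^sub>V w"
  shows "vmax A \<preceq>\<^sub>V w"
proof -
  obtain N where N: "\<forall>v\<in>A. \<forall>j>N. v j = 0"
  proof -
    have "finite (\<Union>v\<in>A. {j. v j \<noteq> 0})" using assms(1,3) unfolding inV_def by blast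
    then obtain N where "\<forall>j\<in>(\<Union>v\<in>A. {j. v j \<noteq> 0}). j \<le> N"
      unfolding finite_nat_set_iff_bounded_le by blast
    then have "\<forall>v\<in>A. \<forall>j>N. v j = 0" by (meson UN_I leD mem_Collect_eq)
    then show thesis by (rule that)
  qed
  define M where "M J = Max ((\<lambda>v. tail v J) ` A)" for J
  have M_vanish: "\<forall>j>N. M j = 0"
  proof (intro allI impI)
    fix j assume "N < j"
    then have "tail v j = 0" if "v \<in> A" for v using N that tail_vanishes_beyond by blast
    then have "(\<lambda>v. tail v j) ` A = {0}" using assms(2) by auto
    then show "M j = 0" unfolding M_def by simp
  qed
  have M_antimono: "M (Suc J) \<le> M J" for J
  proof -
    have "tail v (Suc J) \<le> M J" if "v \<in> A" for v
    proof -
      have "tail v (Suc J) \<le> tail v J" using tail_Suc[of v J] assms(3) that by simp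
      also have "\<dots> \<le> M J" unfolding M_def using assms(1) that by simp
      finally show ?thesis .
    qed
    then show ?thesis unfolding M_def[of "Suc J"] using assms(1,2) by simp
  qed
  have "tail (vmax A) = M"
  proof (rule tail_eqI[OF M_vanish], intro allI)
    fix j
    show "M j = vmax A j + M (Suc j)"
      using M_antimono[of j] unfolding vmax_def M_def[symmetric] by simp
  qed
  moreover have "M J \<le> tail w J" for J
    using assms(1,2,4) unfolding M_def vle_def by simp
  ultimately show ?thesis unfolding vle_def by simp
qed

lemma sum_atMost_choose_Suc_Suc:
  "(\<Sum>i\<le>Suc k. Suc m choose i) = (\<Sum>i\<le>Suc k. m choose i) + (\<Sum>i\<le>k. m choose i)"
  by (induction k) auto

lemma one_le_sum_atMost_choose: "1 \<le> (\<Sum>i\<le>k. n choose i)"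
  using member_le_sum[of 0 "{..k}" "\<lambda>i. n choose i"] by simp

lemma gamma_bin_apply:
  "gamma_bin n n' j = (if j \<le> n' \<and> n' - j \<le> n then n' choose (n' - j) else 0)"
proof -
  have "gamma_bin n n' j = (\<Sum>i\<le>n. if i = n' - j then (if j \<le> n' then n' choose i else 0) else 0)"
    unfolding gamma_bin_def unitv_def
    by (rule sum.cong) (auto simp: binomial_eq_0)
  also have "\<dots> = (if n' - j \<le> n \<and> j \<le> n' then n' choose (n' - j) else 0)"
    by simp
  finally show ?thesis by auto
qed

lemma tail_gamma_bin:
  "tail (gamma_bin n n') J = (if J \<le> n' then \<Sum>i\<le>min n (n' - J). n' choose i else 0)"
proof -
  define f where "f J = (if J \<le> n' then \<Sum>i\<le>min n (n' - J). n' choose i else 0)" for J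
  have recurrence: "f j = gamma_bin n n' j + f (Suc j)" for j
  proof (cases "j < n'")
    case True
    then obtain t where t: "n' - j = Suc t" "n' - Suc j = t"
      by (metis Suc_diff_Suc)
    have f_j: "f j = (\<Sum>i\<le>min n (Suc t). n' choose i)"
      and f_Suc_j: "f (Suc j) = (\<Sum>i\<le>min n t. n' choose i)"
      using True t unfolding f_def by simp_all
    have "gamma_bin n n' j = (if Suc t \<le> n then n' choose Suc t else 0)"
      using True t unfolding gamma_bin_apply by simp
    then show ?thesis
      unfolding f_j f_Suc_j by (cases "t < n") (simp_all add: min_absorb2 min_absorb1)
  next
    case False
    then show ?thesis
      by (cases "j = n'") (simp_all add: f_def gamma_bin_apply)
  qed
  have "tail (gamma_bin n n') = f"
  proof (rule tail_eqI[of n'])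
    show "\<forall>j>n'. f j = 0" by (simp add: f_def)
    show "\<forall>j. f j = gamma_bin n n' j + f (Suc j)" using recurrence by blast
  qed
  then show ?thesis unfolding f_def by simp
qed

lemma inV_gamma_bin: "inV (gamma_bin n n')"
  unfolding inV_iff_vanishes_beyond gamma_bin_apply by (intro exI[of _ n']) simp

lemma gamma_bin_vle_mono:
  assumes "n \<le> m"
  shows "gamma_bin n n' \<preceq>\<^sub>V gamma_bin m n'"
  unfolding vle_def tail_gamma_bin
  using assms by (auto intro!: sum_mono2)

lemma unitv_0_vle_gamma_bin: "\<ee> 0 \<preceq>\<^sub>V gamma_bin n n'"
proof -
  have "tail (\<ee> 0) = (\<lambda>J. if J = 0 then 1 else 0)"
    by (rule tail_eqI[of 0]) (auto simp: unitv_def)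
  then show ?thesis
    unfolding vle_def tail_gamma_bin using one_le_sum_atMost_choose by simp
qed

subsection \<open>Activation patterns of an affine arrangement\<close>

text \<open>Inputs are indexed by an arbitrary coordinate set \<open>K\<close> (instead of \<open>{..<n}\<close>), so that
  restricting an arrangement to a hyperplane can be modelled by dropping one coordinate.\<close>

definition preact :: "nat set \<Rightarrow> (nat \<Rightarrow> nat \<Rightarrow> real) \<Rightarrow> (nat \<Rightarrow> real) \<Rightarrow> (nat \<Rightarrow> real) \<Rightarrow> nat \<Rightarrow> real"
  where "preact K W b x i = (\<Sum>k\<in>K. x k * W i k) + b i"

definition act_pattern_on :: "nat set \<Rightarrow> nat \<Rightarrow> (nat \<Rightarrow> nat \<Rightarrow> real) \<Rightarrow> (nat \<Rightarrow> real)
    \<Rightarrow> (nat \<Rightarrow> real) \<Rightarrow> nat \<Rightarrow> nat"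
  where "act_pattern_on K m W b x = (\<lambda>i. if i < m \<and> 0 < preact K W b x i then 1 else 0)"

definition patterns_on :: "nat set \<Rightarrow> nat \<Rightarrow> (nat \<Rightarrow> nat \<Rightarrow> real) \<Rightarrow> (nat \<Rightarrow> real) \<Rightarrow> (nat \<Rightarrow> nat) set"
  where "patterns_on K m W b = range (act_pattern_on K m W b)"

definition binary_patterns :: "nat \<Rightarrow> (nat \<Rightarrow> nat) set"
  where "binary_patterns m = (\<lambda>S i. if i \<in> S then 1 else 0) ` Pow {..<m}"

lemma finite_binary_patterns: "finite (binary_patterns m)"
  unfolding binary_patterns_def by simp

lemma pat_size_le_if_binary_pattern:
  assumes "s \<in> binary_patterns m"
  shows "pat_size m s \<le> m"
proof -
  obtain S where s: "s = (\<lambda>i. if i \<in> S then 1 else 0)"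
    using assms unfolding binary_patterns_def by blast
  have "pat_size m s \<le> (\<Sum>i<m. 1)"
    unfolding pat_size_def s by (rule sum_mono) simp
  then show ?thesis by simp
qed

lemma patterns_on_subset_binary_patterns: "patterns_on K m W b \<subseteq> binary_patterns m"
proof
  fix s assume "s \<in> patterns_on K m W b"
  then obtain x where s: "s = act_pattern_on K m W b x" unfolding patterns_on_def by blast
  show "s \<in> binary_patterns m"
    unfolding binary_patterns_def
    by (rule image_eqI[of _ _ "{i. i < m \<and> 0 < preact K W b x i}"])
      (auto simp: s act_pattern_on_def)
qed

lemma patterns_eq_patterns_on: "patterns n n' W b = patterns_on {..<n} n' W b"
proof
  show "patterns n n' W b \<subseteq> patterns_on {..<n} n' W b"
    unfolding patterns_def patterns_on_def act_pattern_def act_pattern_on_def preact_def by auto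
next
  show "patterns_on {..<n} n' W b \<subseteq> patterns n n' W b"
  proof
    fix s assume "s \<in> patterns_on {..<n} n' W b"
    then obtain x where s: "s = act_pattern_on {..<n} n' W b x" unfolding patterns_on_def by blast
    define x' where "x' k = (if k < n then x k else 0)" for k
    have "(\<Sum>k<n. x' k * W i k) = (\<Sum>k<n. x k * W i k)" for i
      unfolding x'_def by (rule sum.cong) auto
    then have "s = act_pattern n n' W b x'"
      unfolding s act_pattern_def act_pattern_on_def preact_def by simp
    moreover have "\<forall>k\<ge>n. x' k = 0" unfolding x'_def by simp
    ultimately show "s \<in> patterns n n' W b" unfolding patterns_def by blast
  qed
qed

lemma act_pattern_on_beyond: "m \<le> i \<Longrightarrow> act_pattern_on K m W b x i = 0"
  unfolding act_pattern_on_def by simp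

lemma act_pattern_on_Suc:
  "act_pattern_on K (Suc m) W b x =
     (act_pattern_on K m W b x)(m := if 0 < preact K W b x m then 1 else 0)"
  unfolding act_pattern_on_def by auto

lemma preact_segment:
  "preact K W b (\<lambda>j. (1 - t) * x j + t * y j) i = (1 - t) * preact K W b x i + t * preact K W b y i"
proof -
  have "(\<Sum>k\<in>K. ((1 - t) * x k + t * y k) * W i k)
      = (\<Sum>k\<in>K. (1 - t) * (x k * W i k) + t * (y k * W i k))"
    by (simp add: algebra_simps)
  also have "\<dots> = (1 - t) * (\<Sum>k\<in>K. x k * W i k) + t * (\<Sum>k\<in>K. y k * W i k)"
    by (simp add: sum.distrib sum_distrib_left)
  finally have "(\<Sum>k\<in>K. ((1 - t) * x k + t * y k) * W i k)
      = (1 - t) * (\<Sum>k\<in>K. x k * W i k) + t * (\<Sum>k\<in>K. y k * W i k)" .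
  then show ?thesis unfolding preact_def by (simp add: algebra_simps)
qed

lemma hyperplane_point_with_pattern:
  assumes same: "act_pattern_on K m W b x = act_pattern_on K m W b y"
    and pos: "0 < preact K W b x m" and nonpos: "preact K W b y m \<le> 0"
  shows "\<exists>z. preact K W b z m = 0 \<and> act_pattern_on K m W b z = act_pattern_on K m W b x"
proof -
  define a where "a = preact K W b x m"
  define c where "c = preact K W b y m"
  define t where "t = a / (a - c)"
  have "0 < a - c" "0 < t" "t \<le> 1"
    using pos nonpos unfolding a_def c_def t_def by (auto simp: field_simps)
  define z where "z j = (1 - t) * x j + t * y j" for j
  have on_hyperplane: "preact K W b z m = 0"
    unfolding z_def preact_segment a_def[symmetric] c_def[symmetric] t_def
    using \<open>0 < a - c\<close> by (simp add: field_simps)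
  text \<open>Each neuron \<open>i < m\<close> has the same sign at both endpoints, hence on the whole segment.\<close>
  have "0 < preact K W b z i \<longleftrightarrow> 0 < preact K W b x i" if "i < m" for i
  proof -
    have "0 < preact K W b x i \<longleftrightarrow> 0 < preact K W b y i"
      using fun_cong[OF same, of i] that unfolding act_pattern_on_def by (auto split: if_splits)
    then show ?thesis
      unfolding z_def preact_segment using \<open>0 < t\<close> \<open>t \<le> 1\<close>
      by (smt (verit) mult_nonneg_nonneg mult_pos_pos mult_nonneg_nonpos mult_le_0_iff)
  qed
  then have "act_pattern_on K m W b z = act_pattern_on K m W b x"
    unfolding act_pattern_on_def by (intro ext) auto
  with on_hyperplane show ?thesis by blast
qed

text \<open>Solving \<open>preact K W b x m = 0\<close> for the coordinate \<open>k0\<close> and substituting: the arrangement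
  restricted to that hyperplane, in the coordinates \<open>K - {k0}\<close>.\<close>

definition hyperplane_weights :: "(nat \<Rightarrow> nat \<Rightarrow> real) \<Rightarrow> nat \<Rightarrow> nat \<Rightarrow> nat \<Rightarrow> nat \<Rightarrow> real"
  where "hyperplane_weights W m k0 = (\<lambda>i j. W i j - W i k0 * W m j / W m k0)"

definition hyperplane_bias :: "(nat \<Rightarrow> nat \<Rightarrow> real) \<Rightarrow> (nat \<Rightarrow> real) \<Rightarrow> nat \<Rightarrow> nat \<Rightarrow> nat \<Rightarrow> real"
  where "hyperplane_bias W b m k0 = (\<lambda>i. b i - W i k0 * b m / W m k0)"

lemma preact_hyperplane:
  assumes "finite K" "k0 \<in> K" "W m k0 \<noteq> 0" "preact K W b z m = 0"
  shows "preact (K - {k0}) (hyperplane_weights W m k0) (hyperplane_bias W b m k0) z i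
    = preact K W b z i"
proof -
  define S where "S l = (\<Sum>j\<in>K - {k0}. z j * W l j)" for l
  have split: "preact K W b z l = z k0 * W l k0 + S l + b l" for l
    unfolding preact_def S_def using assms(1,2) by (simp add: sum.remove)
  have "(\<Sum>j\<in>K - {k0}. z j * hyperplane_weights W m k0 i j) = S i - W i k0 / W m k0 * S m"
    unfolding hyperplane_weights_def S_def
    by (simp add: sum_subtractf sum_distrib_left algebra_simps)
  then have "preact (K - {k0}) (hyperplane_weights W m k0) (hyperplane_bias W b m k0) z i
      = S i + b i - W i k0 / W m k0 * (S m + b m)"
    unfolding preact_def hyperplane_bias_def using assms(3) by (simp add: field_simps)
  also have "S m + b m = - (z k0 * W m k0)"
    using assms(4) split[of m] by simp
  finally show ?thesis
    using assms(3) split[of i] by (simp add: field_simps)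
qed

lemma act_pattern_on_hyperplane:
  assumes "finite K" "k0 \<in> K" "W m k0 \<noteq> 0" "preact K W b z m = 0"
  shows "act_pattern_on (K - {k0}) m' (hyperplane_weights W m k0) (hyperplane_bias W b m k0) z
    = act_pattern_on K m' W b z"
  unfolding act_pattern_on_def preact_hyperplane[OF assms] ..

subsection \<open>Counting patterns by deletion and restriction\<close>

definition doubled_patterns :: "(nat \<Rightarrow> nat) set \<Rightarrow> nat \<Rightarrow> (nat \<Rightarrow> nat) set"
  where "doubled_patterns S m = {s \<in> S. s m = 0 \<and> s(m := 1) \<in> S}"

lemma card_eq_card_delete_plus_card_doubled:
  fixes S :: "(nat \<Rightarrow> nat) set"
  assumes "finite S" and binary: "\<forall>s\<in>S. s m \<le> 1"
  shows "card S = card ((\<lambda>s. s(m := 0)) ` S) + card (doubled_patterns S m)"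
proof -
  define r where "r s = s(m := 0)" for s :: "nat \<Rightarrow> nat"
  define S1 where "S1 = {s \<in> S. s m = 1}"
  define S0 where "S0 = {s \<in> S. s m = 0}"
  have fin: "finite S1" "finite S0" using assms(1) unfolding S1_def S0_def by simp_all
  have "S = S1 \<union> S0" using binary unfolding S1_def S0_def by force
  have "S1 \<inter> S0 = {}" unfolding S1_def S0_def by auto
  have "card S = card (S1 \<union> S0)" using \<open>S = S1 \<union> S0\<close> by simp
  also have "\<dots> = card S1 + card S0" by (rule card_Un_disjoint[OF fin \<open>S1 \<inter> S0 = {}\<close>])
  also have "card S1 = card (r ` S1)"
  proof (rule card_image[symmetric], rule inj_onI)
    fix s t assume "s \<in> S1" "t \<in> S1" "r s = r t"
    from \<open>s \<in> S1\<close> \<open>t \<in> S1\<close> have "s = (r s)(m := 1)" "t = (r t)(m := 1)"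
      unfolding S1_def r_def by auto
    with \<open>r s = r t\<close> show "s = t" by simp
  qed
  also have "card (r ` S1) + card S0 = card (r ` S1 \<union> S0) + card (r ` S1 \<inter> S0)"
    by (rule card_Un_Int) (use fin in auto)
  also have "r ` S1 \<union> S0 = r ` S"
  proof -
    have "r s = s" if "s \<in> S0" for s using that unfolding S0_def r_def by (simp add: fun_upd_idem)
    then have "r ` S0 = S0" by (simp cong: image_cong)
    then show ?thesis using \<open>S = S1 \<union> S0\<close> by (metis image_Un)
  qed
  also have "r ` S1 \<inter> S0 = doubled_patterns S m"
  proof -
    have "s \<in> r ` S1 \<longleftrightarrow> s m = 0 \<and> s(m := 1) \<in> S" for s
    proof
      assume "s \<in> r ` S1"
      then obtain t where "t \<in> S" "t m = 1" "s = t(m := 0)" unfolding S1_def r_def by blast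
      then show "s m = 0 \<and> s(m := 1) \<in> S" by (simp add: fun_upd_idem)
    next
      assume "s m = 0 \<and> s(m := 1) \<in> S"
      then show "s \<in> r ` S1" unfolding S1_def r_def
        by (intro image_eqI[of _ _ "s(m := 1)"]) (auto simp: fun_upd_idem)
    qed
    then show ?thesis unfolding S0_def doubled_patterns_def by auto
  qed
  finally show ?thesis unfolding r_def .
qed

definition patterns_inactive_le :: "nat set \<Rightarrow> nat \<Rightarrow> (nat \<Rightarrow> nat \<Rightarrow> real) \<Rightarrow> (nat \<Rightarrow> real)
    \<Rightarrow> nat \<Rightarrow> (nat \<Rightarrow> nat) set"
  where "patterns_inactive_le K m W b k = {s \<in> patterns_on K m W b. m \<le> pat_size m s + k}"

lemma finite_patterns_inactive_le: "finite (patterns_inactive_le K m W b k)"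
  unfolding patterns_inactive_le_def
  using finite_subset[OF patterns_on_subset_binary_patterns finite_binary_patterns] by simp

lemma pat_size_Suc: "pat_size (Suc m) s = pat_size m s + s m"
  unfolding pat_size_def by simp

lemma pat_size_fun_upd_beyond:
  assumes "m \<le> i"
  shows "pat_size m (s(i := v)) = pat_size m s"
  unfolding pat_size_def using assms by (intro sum.cong) auto

lemma delete_patterns_inactive_le_subset:
  "(\<lambda>s. s(m := 0)) ` patterns_inactive_le K (Suc m) W b k \<subseteq> patterns_inactive_le K m W b k"
proof
  fix s' assume "s' \<in> (\<lambda>s. s(m := 0)) ` patterns_inactive_le K (Suc m) W b k"
  then obtain x where s': "s' = (act_pattern_on K (Suc m) W b x)(m := 0)"
    and size: "Suc m \<le> pat_size (Suc m) (act_pattern_on K (Suc m) W b x) + k"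
    unfolding patterns_inactive_le_def patterns_on_def by blast
  have "s' = act_pattern_on K m W b x"
    unfolding s' act_pattern_on_Suc by (simp add: act_pattern_on_def fun_upd_idem_iff)
  moreover have "m \<le> pat_size m s' + k"
    using size unfolding pat_size_Suc calculation act_pattern_on_Suc
    by (simp add: pat_size_fun_upd_beyond split: if_splits)
  ultimately show "s' \<in> patterns_inactive_le K m W b k"
    unfolding patterns_inactive_le_def patterns_on_def by auto
qed

lemma doubled_pattern_realized_on_both_sides:
  assumes "s \<in> patterns_on K (Suc m) W b" "s m = 0" "s(m := 1) \<in> patterns_on K (Suc m) W b"
  shows "\<exists>x y. act_pattern_on K m W b x = s \<and> act_pattern_on K m W b y = s
    \<and> 0 < preact K W b x m \<and> preact K W b y m \<le> 0"
proof -
  obtain x where x: "s(m := 1) = act_pattern_on K (Suc m) W b x"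
    using assms(3) unfolding patterns_on_def by blast
  obtain y where y: "s = act_pattern_on K (Suc m) W b y"
    using assms(1) unfolding patterns_on_def by blast
  have "act_pattern_on K m W b z = (act_pattern_on K (Suc m) W b z)(m := 0)" for z
    unfolding act_pattern_on_Suc by (simp add: act_pattern_on_beyond fun_upd_idem)
  then have "act_pattern_on K m W b x = s" "act_pattern_on K m W b y = s"
    using x y assms(2) by (metis fun_upd_idem fun_upd_upd)+
  moreover have "0 < preact K W b x m" "preact K W b y m \<le> 0"
    using fun_cong[OF x, of m] fun_cong[OF y, of m] assms(2) unfolding act_pattern_on_def
    by (auto split: if_splits)
  ultimately show ?thesis by blast
qed

lemma sum_atMost_choose_mono: "(\<Sum>i\<le>k. m choose i) \<le> (\<Sum>i\<le>k. Suc m choose i)"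
  by (intro sum_mono binomial_right_mono) simp

lemma doubled_patterns_empty:
  assumes "k = 0 \<or> (\<forall>k0\<in>K. W m k0 = 0)"
  shows "doubled_patterns (patterns_inactive_le K (Suc m) W b k) m = {}"
proof (rule ccontr)
  assume "doubled_patterns (patterns_inactive_le K (Suc m) W b k) m \<noteq> {}"
  then obtain s where s: "s \<in> patterns_inactive_le K (Suc m) W b k" "s m = 0"
      "s(m := 1) \<in> patterns_inactive_le K (Suc m) W b k"
    unfolding doubled_patterns_def by blast
  then obtain x y where xy: "act_pattern_on K m W b x = s"
      "0 < preact K W b x m" "preact K W b y m \<le> 0"
    using doubled_pattern_realized_on_both_sides unfolding patterns_inactive_le_def by blast
  show False
  proof (cases "k = 0")
    case True
    have "pat_size m s \<le> m"
      using xy(1) patterns_on_subset_binary_patterns pat_size_le_if_binary_pattern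
      unfolding patterns_on_def by blast
    then show False
      using s True pat_size_Suc[of m s] unfolding patterns_inactive_le_def by simp
  next
    case False
    then have "preact K W b z m = b m" for z
      using assms unfolding preact_def by simp
    with xy(2,3) show False by simp
  qed
qed

lemma doubled_patterns_subset_hyperplane:
  assumes "finite K" "k0 \<in> K" "W m k0 \<noteq> 0"
  shows "doubled_patterns (patterns_inactive_le K (Suc m) W b (Suc k)) m
    \<subseteq> patterns_inactive_le (K - {k0}) m (hyperplane_weights W m k0) (hyperplane_bias W b m k0) k"
proof
  fix s assume "s \<in> doubled_patterns (patterns_inactive_le K (Suc m) W b (Suc k)) m"
  then have s: "s \<in> patterns_inactive_le K (Suc m) W b (Suc k)" "s m = 0"
      "s(m := 1) \<in> patterns_inactive_le K (Suc m) W b (Suc k)"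
    unfolding doubled_patterns_def by blast+
  then obtain x y where "act_pattern_on K m W b x = s" "act_pattern_on K m W b y = s"
      "0 < preact K W b x m" "preact K W b y m \<le> 0"
    using doubled_pattern_realized_on_both_sides unfolding patterns_inactive_le_def by blast
  then obtain z where z: "preact K W b z m = 0" "act_pattern_on K m W b z = s"
    using hyperplane_point_with_pattern by metis
  then have "s = act_pattern_on (K - {k0}) m (hyperplane_weights W m k0) (hyperplane_bias W b m k0) z"
    using act_pattern_on_hyperplane[OF assms z(1)] by simp
  moreover have "m \<le> pat_size m s + k"
    using s pat_size_Suc[of m s] unfolding patterns_inactive_le_def by simp
  ultimately show "s \<in> patterns_inactive_le (K - {k0}) m
      (hyperplane_weights W m k0) (hyperplane_bias W b m k0) k"
    unfolding patterns_inactive_le_def patterns_on_def by blast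
qed

lemma card_patterns_inactive_le:
  "finite K \<Longrightarrow> card (patterns_inactive_le K m W b k) \<le> (\<Sum>i\<le>min (card K) k. m choose i)"
proof (induction m arbitrary: K W b k)
  case 0
  have "patterns_on K 0 W b = {\<lambda>_. 0}"
    unfolding patterns_on_def act_pattern_on_def by auto
  then show ?case
    unfolding patterns_inactive_le_def using one_le_sum_atMost_choose by (simp add: card_mono)
next
  case (Suc m)
  define S where "S = patterns_inactive_le K (Suc m) W b k"
  have binary: "\<forall>s\<in>S. s m \<le> 1"
    unfolding S_def patterns_inactive_le_def patterns_on_def act_pattern_on_def by auto
  have "card ((\<lambda>s. s(m := 0)) ` S) \<le> card (patterns_inactive_le K m W b k)"
    unfolding S_def by (intro card_mono finite_patterns_inactive_le delete_patterns_inactive_le_subset)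
  also have "\<dots> \<le> (\<Sum>i\<le>min (card K) k. m choose i)"
    by (rule Suc.IH[OF Suc.prems])
  finally have card_S: "card S \<le> (\<Sum>i\<le>min (card K) k. m choose i) + card (doubled_patterns S m)"
    using card_eq_card_delete_plus_card_doubled[OF _ binary] finite_patterns_inactive_le
    unfolding S_def by simp
  show ?case
  proof (cases "k = 0 \<or> (\<forall>k0\<in>K. W m k0 = 0)")
    case True
    then show ?thesis
      using card_S doubled_patterns_empty[of k K W m b, OF True]
        sum_atMost_choose_mono[where k = "min (card K) k" and m = m]
      unfolding S_def by simp
  next
    case False
    then obtain k' k0 where k': "k = Suc k'" and k0: "k0 \<in> K" "W m k0 \<noteq> 0"
      using not0_implies_Suc by blast
    then obtain d where d: "card K = Suc d" "card (K - {k0}) = d"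
      using Suc.prems by (metis card_Suc_Diff1)
    have "card (doubled_patterns S m) \<le> card (patterns_inactive_le (K - {k0}) m
        (hyperplane_weights W m k0) (hyperplane_bias W b m k0) k')"
      unfolding S_def k'
      by (intro card_mono finite_patterns_inactive_le doubled_patterns_subset_hyperplane Suc.prems k0)
    also have "\<dots> \<le> (\<Sum>i\<le>min d k'. m choose i)"
      using Suc.IH[of "K - {k0}"] Suc.prems d by simp
    finally show ?thesis
      using card_S sum_atMost_choose_Suc_Suc[where k = "min d k'" and m = m] unfolding S_def d k' by simp
  qed
qed

subsection \<open>Histograms\<close>

lemma pat_size_ge_beyond_empty:
  assumes "P \<subseteq> binary_patterns m" "m < j"
  shows "{s \<in> P. j \<le> pat_size m s} = {}"
proof -
  have "pat_size m s \<le> m" if "s \<in> P" for s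
    using assms(1) that pat_size_le_if_binary_pattern by blast
  with assms(2) show ?thesis by fastforce
qed

lemma tail_hist:
  assumes "P \<subseteq> binary_patterns m"
  shows "tail (hist m P) J = card {s \<in> P. J \<le> pat_size m s}"
proof -
  have fin: "finite P" using assms finite_binary_patterns by (rule finite_subset)
  define f where "f J = card {s \<in> P. J \<le> pat_size m s}" for J
  have "tail (hist m P) = f"
  proof (rule tail_eqI[of m])
    show "\<forall>j>m. f j = 0"
    proof (intro allI impI)
      fix j assume "m < j"
      show "f j = 0" unfolding f_def pat_size_ge_beyond_empty[OF assms \<open>m < j\<close>] by simp
    qed
    show "\<forall>j. f j = hist m P j + f (Suc j)"
    proof
      fix j
      have "{s \<in> P. j \<le> pat_size m s}
          = {s \<in> P. pat_size m s = j} \<union> {s \<in> P. Suc j \<le> pat_size m s}"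
        by auto
      then show "f j = hist m P j + f (Suc j)"
        unfolding f_def hist_def using fin by (simp add: card_Un_disjoint disjoint_iff)
    qed
  qed
  then show ?thesis unfolding f_def by simp
qed

lemma inV_hist:
  assumes "P \<subseteq> binary_patterns m"
  shows "inV (hist m P)"
proof -
  have "hist m P j = 0" if "m < j" for j
  proof -
    have "{s \<in> P. pat_size m s = j} \<subseteq> {s \<in> P. j \<le> pat_size m s}" by auto
    then have "{s \<in> P. pat_size m s = j} = {}"
      unfolding pat_size_ge_beyond_empty[OF assms that] by blast
    then show ?thesis unfolding hist_def by (simp only: card.empty)
  qed
  then show ?thesis unfolding inV_iff_vanishes_beyond by blast
qed

lemma hist_patterns_vle_gamma_bin: "hist n' (patterns n n' W b) \<preceq>\<^sub>V gamma_bin n n'"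
  unfolding vle_def
proof
  fix J
  define P where "P = patterns_on {..<n} n' W b"
  have binary: "P \<subseteq> binary_patterns n'"
    unfolding P_def by (rule patterns_on_subset_binary_patterns)
  have "tail (hist n' (patterns n n' W b)) J = card {s \<in> P. J \<le> pat_size n' s}"
    unfolding patterns_eq_patterns_on P_def[symmetric] using binary by (rule tail_hist)
  also have "\<dots> \<le> tail (gamma_bin n n') J"
  proof (cases "J \<le> n'")
    case True
    then have "{s \<in> P. J \<le> pat_size n' s} = patterns_inactive_le {..<n} n' W b (n' - J)"
      unfolding patterns_inactive_le_def P_def by auto
    then show ?thesis
      using card_patterns_inactive_le[of "{..<n}" n' W b "n' - J"] True
      by (simp add: tail_gamma_bin)
  next
    case False
    then have "{s \<in> P. J \<le> pat_size n' s} = {}"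
      by (intro pat_size_ge_beyond_empty[OF binary]) simp
    then show ?thesis by (simp only: card.empty zero_le)
  qed
  finally show "tail (hist n' (patterns n n' W b)) J \<le> tail (gamma_bin n n') J" .
qed

lemma finite_hist_family: "finite (hist_family n n')"
proof -
  have "hist_family n n' \<subseteq> insert (\<ee> 0) (hist n' ` Pow (binary_patterns n'))"
    unfolding hist_family_def patterns_eq_patterns_on
    using patterns_on_subset_binary_patterns by auto
  then show ?thesis by (rule finite_subset) (simp add: finite_binary_patterns)
qed

lemma hist_family_nonempty: "hist_family n n' \<noteq> {}"
  unfolding hist_family_def by auto

lemma hist_family_bounded:
  assumes "h \<in> hist_family n n'"
  shows "inV h \<and> h \<preceq>\<^sub>V gamma_bin n n'"
proof (cases "n = 0")
  case True
  then have "h = \<ee> 0" using assms unfolding hist_family_def by simp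
  moreover have "inV (\<ee> 0)" unfolding inV_def unitv_def by simp
  ultimately show ?thesis using unitv_0_vle_gamma_bin by simp
next
  case False
  then obtain W b where "h = hist n' (patterns n n' W b)"
    using assms unfolding hist_family_def by auto
  then show ?thesis
    using inV_hist[OF patterns_on_subset_binary_patterns] hist_patterns_vle_gamma_bin
    unfolding patterns_eq_patterns_on by simp
qed

theorem mainTheorem9:
  shows "bound_condition gamma_bin"
  unfolding bound_condition_def
proof (intro conjI allI impI)
  fix n' n :: nat
  show "inV (gamma_bin n n')" by (rule inV_gamma_bin)
  show "vmax (hist_family n n') \<preceq>\<^sub>V gamma_bin n n'"
    using hist_family_bounded by (intro vmax_vle finite_hist_family hist_family_nonempty) blast+
next
  fix n' n m :: nat
  assume "1 \<le> n' \<and> n \<le> m \<and> m \<le> n'"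
  then show "gamma_bin n n' \<preceq>\<^sub>V gamma_bin m n'" by (intro gamma_bin_vle_mono) simp
qed

end
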